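(* Let $F$ be an infinite field of characteristic $p>2$, let $k$ be a positive integer and $n\in\mathbb{N}$. Then the polynomial $t_{2n}=[z_1,z_2][z_3,z_4]\cdots[z_{2n-1},z_{2n}]$, where all $z_j$ are variables of degree $0$, is not a $\mathbb{Z}$-graded identity of $E^{k^\ast}$.
   Context: $L$ is a vector space over $F$ with basis $e_1,e_2,\dots$, $E$ its unital Grassmann algebra (basis $1$ and $e_{i_1}\cdots e_{i_k}$, $i_1<\cdots<i_k$, with $e_ie_j=-e_je_i$). $E^{k^\ast}$ is $E$ with the $\mathbb{Z}$-grading induced by $\|e_i\|=1$ for $i\le k$, $\|e_i\|=0$ for $i>k$ (basis monomials get the sum of degrees of their factors; $1$ has degree $0$). A graded polynomial is a graded identity of $A$ if it vanishes whenever each variable is replaced by an element of the homogeneous component of $A$ of that variable's degree. $[a,b]=ab-ba$. *)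

theory Defs
  imports Main
begin

text \<open>An element is represented by its coefficient function on basis monomials;
  the monomial e_{i_1}...e_{i_m} (i_1 < ... < i_m) is represented by the finite
  set {i_1,...,i_m} of positive naturals, and 1 by the empty set.\<close>

definition grass :: "(nat set \<Rightarrow> 'a::field) set" where
  "grass = {f. finite {S. f S \<noteq> 0} \<and> (\<forall>S. f S \<noteq> 0 \<longrightarrow> finite S \<and> 0 \<notin> S)}"

text \<open>Sign of e_A e_B = sign * e_(A \<union> B) for disjoint A, B: parity of inversions.\<close>
definition gsign :: "nat set \<Rightarrow> nat set \<Rightarrow> 'a::ring_1" where
  "gsign A B = (-1) ^ card {(a, b). a \<in> A \<and> b \<in> B \<and> b < a}"

definition gmult :: "(nat set \<Rightarrow> 'a::field) \<Rightarrow> (nat set \<Rightarrow> 'a) \<Rightarrow> (nat set \<Rightarrow> 'a)" where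
  "gmult f g = (\<lambda>S. if finite S then (\<Sum>A\<in>Pow S. gsign A (S - A) * f A * g (S - A)) else 0)"

definition gone :: "nat set \<Rightarrow> 'a::field" where
  "gone = (\<lambda>S. if S = {} then 1 else 0)"

definition gcomm :: "(nat set \<Rightarrow> 'a::field) \<Rightarrow> (nat set \<Rightarrow> 'a) \<Rightarrow> (nat set \<Rightarrow> 'a)" where
  "gcomm a b = (\<lambda>S. gmult a b S - gmult b a S)"

text \<open>Homogeneous component of degree d of E^{k*} (deg e_i = 1 for i \<le> k, 0 otherwise):
  spanned by monomials with exactly d generators of index in {1..k}.\<close>
definition gcomp :: "nat \<Rightarrow> int \<Rightarrow> (nat set \<Rightarrow> 'a::field) set" where
  "gcomp k d = {f \<in> grass. \<forall>S. f S \<noteq> 0 \<longrightarrow> int (card (S \<inter> {1..k})) = d}"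

text \<open>Evaluation of t_{2n} = [z_1,z_2][z_3,z_4]...[z_{2n-1},z_{2n}] (variables indexed from 0 here).\<close>
fun tpoly :: "(nat \<Rightarrow> (nat set \<Rightarrow> 'a::field)) \<Rightarrow> nat \<Rightarrow> (nat set \<Rightarrow> 'a)" where
  "tpoly z 0 = gone"
| "tpoly z (Suc n) = gmult (tpoly z n) (gcomm (z (2 * n)) (z (2 * n + 1)))"

end

theory Submission
  imports Defs
begin

text \<open>Substitute distinct generators of degree 0, z_j = e_(m+j) with m > k. Since
  e_a e_b = - e_b e_a, each commutator becomes [e_a, e_b] = 2 e_a e_b, so t_2n evaluates to
  2^n e_(m) e_(m+1) ... e_(m+2n-1), which is nonzero because the characteristic is not 2.\<close>

definition gmonom :: "nat set \<Rightarrow> 'a::field \<Rightarrow> nat set \<Rightarrow> 'a" where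
  "gmonom A c = (\<lambda>T. if T = A then c else 0)"

lemma gmonom_in_gcomp:
  assumes "finite A" "0 \<notin> A" "int (card (A \<inter> {1..k})) = d"
  shows "gmonom A c \<in> gcomp k d"
proof -
  have "{S. gmonom A c S \<noteq> 0} \<subseteq> {A}" by (auto simp: gmonom_def)
  then have "finite {S. gmonom A c S \<noteq> 0}" by (rule finite_subset) simp
  with assms show ?thesis by (auto simp: gcomp_def grass_def gmonom_def)
qed

lemma gmult_gmonom:
  assumes "finite A" "finite B" "A \<inter> B = {}"
  shows "gmult (gmonom A c) (gmonom B d) = gmonom (A \<union> B) (gsign A B * c * d)"
proof
  fix S :: "nat set"
  show "gmult (gmonom A c) (gmonom B d) S = gmonom (A \<union> B) (gsign A B * c * d) S"
  proof (cases "finite S")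
    case False
    with assms have "S \<noteq> A \<union> B" by auto
    with False show ?thesis by (simp add: gmult_def gmonom_def)
  next
    case True
    have "gmult (gmonom A c) (gmonom B d) S =
        (\<Sum>A'\<in>Pow S. gsign A' (S - A') * gmonom A c A' * gmonom B d (S - A'))"
      using True by (simp add: gmult_def)
    \<comment> \<open>only the splitting S = A \<union> (S - A) contributes to the sum\<close>
    also have "\<dots> =
        (\<Sum>A'\<in>Pow S. if A' = A then (if S = A \<union> B then gsign A B * c * d else 0) else 0)"
      using assms by (intro sum.cong) (auto simp: gmonom_def)
    also have "\<dots> = gmonom (A \<union> B) (gsign A B * c * d) S"
      using True by (subst sum.delta) (auto simp: gmonom_def)
    finally show ?thesis .
  qed
qed

lemma gsign_eq_1_if_less:
  assumes "\<forall>a\<in>A. \<forall>b\<in>B. a < b"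
  shows "gsign A B = 1"
proof -
  from assms have no_inversions: "{(a, b). a \<in> A \<and> b \<in> B \<and> b < a} = {}" by fastforce
  show ?thesis unfolding gsign_def no_inversions by simp
qed

lemma gsign_singleton_greater:
  assumes "a < b"
  shows "gsign {b} {a} = -1"
proof -
  from assms have "{(x, y). x \<in> {b} \<and> y \<in> {a} \<and> y < x} = {(b, a)}" by auto
  then show ?thesis by (simp add: gsign_def)
qed

lemma gcomm_generators:
  assumes "a < b"
  shows "gcomm (gmonom {a} (1::'a::field)) (gmonom {b} 1) = gmonom {a, b} 2"
proof -
  have "{a} \<union> {b} = {a, b}" "{b} \<union> {a} = {a, b}" by auto
  with assms have "gmult (gmonom {a} (1::'a)) (gmonom {b} 1) = gmonom {a, b} 1"
    and "gmult (gmonom {b} (1::'a)) (gmonom {a} 1) = gmonom {a, b} (-1)"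
    by (simp_all add: gmult_gmonom gsign_eq_1_if_less gsign_singleton_greater)
  then show ?thesis by (auto simp: gcomm_def gmonom_def)
qed

lemma tpoly_consecutive_generators:
  "tpoly (\<lambda>j. gmonom {m + j} (1::'a::field)) n = gmonom {m..<m + 2 * n} (2 ^ n)"
proof (induction n)
  case 0
  show ?case by (simp add: gone_def gmonom_def fun_eq_iff)
next
  case (Suc n)
  let ?A = "{m..<m + 2 * n}" and ?B = "{m + 2 * n, m + (2 * n + 1)}"
  have "gcomm (gmonom {m + 2 * n} (1::'a)) (gmonom {m + (2 * n + 1)} 1) = gmonom ?B 2"
    by (rule gcomm_generators) simp
  with Suc.IH have "tpoly (\<lambda>j. gmonom {m + j} (1::'a)) (Suc n) = gmult (gmonom ?A (2 ^ n)) (gmonom ?B 2)"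
    by simp
  also have "\<dots> = gmonom (?A \<union> ?B) (gsign ?A ?B * 2 ^ n * 2)"
    by (rule gmult_gmonom) auto
  also have "?A \<union> ?B = {m..<m + 2 * Suc n}" by auto
  also have "gsign ?A ?B = (1::'a)" by (rule gsign_eq_1_if_less) auto
  finally show ?case by (simp add: mult.commute)
qed

lemma two_neq_zero_if_CHAR_gt_2:
  assumes "CHAR('a::semiring_1) > 2"
  shows "(2::'a) \<noteq> 0"
proof
  assume "(2::'a) = 0"
  then have "of_nat 2 = (0::'a)" by simp
  then have "CHAR('a) dvd 2" by (simp only: of_nat_eq_0_iff_char_dvd)
  with assms show False by (auto dest: dvd_imp_le)
qed

theorem mainTheorem6:
  fixes k n :: nat
  assumes "infinite (UNIV :: 'a::field set)"
    and "CHAR('a) > 2"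
    and "k > 0"
  shows "\<exists>z :: nat \<Rightarrow> (nat set \<Rightarrow> 'a). (\<forall>j < 2 * n. z j \<in> gcomp k 0) \<and> tpoly z n \<noteq> (\<lambda>_. 0)"
proof (intro exI conjI allI impI)
  let ?z = "\<lambda>j. gmonom {k + 1 + j} (1::'a)"
  show "?z j \<in> gcomp k 0" for j
    by (rule gmonom_in_gcomp) auto
  have "tpoly ?z n = gmonom {k + 1..<k + 1 + 2 * n} (2 ^ n)"
    by (rule tpoly_consecutive_generators)
  then have "tpoly ?z n {k + 1..<k + 1 + 2 * n} = 2 ^ n"
    by (simp add: gmonom_def)
  moreover have "(2::'a) ^ n \<noteq> 0"
    using two_neq_zero_if_CHAR_gt_2[OF assms(2)] by simp
  ultimately show "tpoly ?z n \<noteq> (\<lambda>_. 0)" by metis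
qed

end
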